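(* Let $n_1,\dots,n_m$ be positive integers, $n=\prod_j n_j$, $\Omega=\times_{j=1}^m\{x\in\mathbb{C}^{n_j}:x^\dagger x=1\}$, and let $\mathcal{L}_R=\{g_G(x_1,\dots,x_m)=(\otimes_j x_j)^\dagger G(\otimes_j x_j): G\ \text{an } n\times n\text{ Hermitian matrix}\}$, a real vector space of real functions on $\Omega$. Let $\Sigma^{\geq}=\{g_G: G\succeq0\}$ and $\Sigma^{<}=\{g_G: G\prec 0\}$. Let $\mathscr{C}\subseteq\mathcal{L}_R$ be a P-coherent set of desirable gambles, i.e. a closed convex cone with $\Sigma^{\geq}\subseteq\mathscr{C}$ and $\mathscr{C}\cap\Sigma^{<}=\emptyset$. For a linear functional $L$ on $\mathcal{L}_R$ define the Hermitian matrix $Z=L\big((\otimes_j x_j)(\otimes_j x_j)^\dagger\big)$ (entrywise, $L$ extended complex-linearly), so that $L(g_G)=\operatorname{Tr}(GZ)$. Then the dual cone $\mathscr{C}^\circ=\{L: L(g)\ge0\ \forall g\in\mathscr{C}\}$ equals the set of those $L$ whose matrix $Z$ satisfies $Z\succeq0$ and $\operatorname{Tr}(GZ)\ge0$ for all $g_G\in\mathscr{C}$.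
   Context: $G\succeq0$ means positive semidefinite, $G\prec0$ negative definite. *)

theory Defs
  imports "HOL-Analysis.Analysis"
begin

(* Multi-indices of the tensor product C^{n_0} (x) ... (x) C^{n_(m-1)}:
   i j < n j for j < m; dimension = prod_j n j *)
definition Idx :: "nat \<Rightarrow> (nat \<Rightarrow> nat) \<Rightarrow> (nat \<Rightarrow> nat) set" where
  "Idx m n = (\<Pi>\<^sub>E j\<in>{..<m}. {..<n j})"

definition Omega :: "nat \<Rightarrow> (nat \<Rightarrow> nat) \<Rightarrow> (nat \<Rightarrow> nat \<Rightarrow> complex) set" where
  "Omega m n = (\<Pi>\<^sub>E j\<in>{..<m}.
      {v \<in> (\<Pi>\<^sub>E a\<in>{..<n j}. UNIV). (\<Sum>a<n j. cnj (v a) * v a) = 1})"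

definition tens :: "nat \<Rightarrow> (nat \<Rightarrow> nat \<Rightarrow> complex) \<Rightarrow> (nat \<Rightarrow> nat) \<Rightarrow> complex" where
  "tens m x i = (\<Prod>j<m. x j (i j))"

type_synonym mat = "(nat \<Rightarrow> nat) \<Rightarrow> (nat \<Rightarrow> nat) \<Rightarrow> complex"
type_synonym gamble = "(nat \<Rightarrow> nat \<Rightarrow> complex) \<Rightarrow> real"

definition hermitian :: "nat \<Rightarrow> (nat \<Rightarrow> nat) \<Rightarrow> mat \<Rightarrow> bool" where
  "hermitian m n G = (\<forall>i\<in>Idx m n. \<forall>k\<in>Idx m n. G i k = cnj (G k i))"

definition quad :: "nat \<Rightarrow> (nat \<Rightarrow> nat) \<Rightarrow> mat \<Rightarrow> ((nat \<Rightarrow> nat) \<Rightarrow> complex) \<Rightarrow> complex" where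
  "quad m n G v = (\<Sum>i\<in>Idx m n. \<Sum>k\<in>Idx m n. cnj (v i) * G i k * v k)"

definition psd :: "nat \<Rightarrow> (nat \<Rightarrow> nat) \<Rightarrow> mat \<Rightarrow> bool" where
  "psd m n G = (hermitian m n G \<and> (\<forall>v. 0 \<le> Re (quad m n G v)))"

definition negdef :: "nat \<Rightarrow> (nat \<Rightarrow> nat) \<Rightarrow> mat \<Rightarrow> bool" where
  "negdef m n G = (hermitian m n G \<and>
     (\<forall>v. (\<exists>i\<in>Idx m n. v i \<noteq> 0) \<longrightarrow> Re (quad m n G v) < 0))"

definition gG :: "nat \<Rightarrow> (nat \<Rightarrow> nat) \<Rightarrow> mat \<Rightarrow> gamble" where
  "gG m n G = (\<lambda>x. if x \<in> Omega m n then
      Re (\<Sum>i\<in>Idx m n. \<Sum>k\<in>Idx m n. cnj (tens m x i) * G i k * tens m x k) else 0)"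

definition LR :: "nat \<Rightarrow> (nat \<Rightarrow> nat) \<Rightarrow> gamble set" where
  "LR m n = {gG m n G | G. hermitian m n G}"

definition SigmaGe :: "nat \<Rightarrow> (nat \<Rightarrow> nat) \<Rightarrow> gamble set" where
  "SigmaGe m n = {gG m n G | G. psd m n G}"

definition SigmaLt :: "nat \<Rightarrow> (nat \<Rightarrow> nat) \<Rightarrow> gamble set" where
  "SigmaLt m n = {gG m n G | G. negdef m n G}"

definition is_convex_cone :: "gamble set \<Rightarrow> bool" where
  "is_convex_cone C = (C \<noteq> {} \<and>
     (\<forall>f\<in>C. \<forall>g\<in>C. \<forall>a b::real. a \<ge> 0 \<longrightarrow> b \<ge> 0 \<longrightarrow> (\<lambda>x. a * f x + b * g x) \<in> C))"

(* closedness w.r.t. the (product) topology on functions; on the finite-dimensional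
   space LR this is the usual topology *)
definition P_coherent :: "nat \<Rightarrow> (nat \<Rightarrow> nat) \<Rightarrow> gamble set \<Rightarrow> bool" where
  "P_coherent m n C = (C \<subseteq> LR m n \<and> closed C \<and> is_convex_cone C \<and>
     SigmaGe m n \<subseteq> C \<and> C \<inter> SigmaLt m n = {})"

definition linear_on :: "gamble set \<Rightarrow> (gamble \<Rightarrow> real) \<Rightarrow> bool" where
  "linear_on V L = (\<forall>f\<in>V. \<forall>g\<in>V. \<forall>a b::real.
      L (\<lambda>x. a * f x + b * g x) = a * L f + b * L g)"

definition entry_re :: "nat \<Rightarrow> (nat \<Rightarrow> nat) \<Rightarrow> (nat \<Rightarrow> nat) \<Rightarrow> (nat \<Rightarrow> nat) \<Rightarrow> gamble" where
  "entry_re m n i k = (\<lambda>x. if x \<in> Omega m n then Re (tens m x i * cnj (tens m x k)) else 0)"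

definition entry_im :: "nat \<Rightarrow> (nat \<Rightarrow> nat) \<Rightarrow> (nat \<Rightarrow> nat) \<Rightarrow> (nat \<Rightarrow> nat) \<Rightarrow> gamble" where
  "entry_im m n i k = (\<lambda>x. if x \<in> Omega m n then Im (tens m x i * cnj (tens m x k)) else 0)"

(* Z = L((tens x)(tens x)^dagger), L extended complex-linearly *)
definition Zmat :: "nat \<Rightarrow> (nat \<Rightarrow> nat) \<Rightarrow> (gamble \<Rightarrow> real) \<Rightarrow> mat" where
  "Zmat m n L = (\<lambda>i k. complex_of_real (L (entry_re m n i k))
                      + \<i> * complex_of_real (L (entry_im m n i k)))"

definition trace_prod :: "nat \<Rightarrow> (nat \<Rightarrow> nat) \<Rightarrow> mat \<Rightarrow> mat \<Rightarrow> complex" where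
  "trace_prod m n G Z = (\<Sum>i\<in>Idx m n. \<Sum>k\<in>Idx m n. G i k * Z k i)"

definition dual_cone :: "nat \<Rightarrow> (nat \<Rightarrow> nat) \<Rightarrow> gamble set \<Rightarrow> (gamble \<Rightarrow> real) set" where
  "dual_cone m n C = {L. linear_on (LR m n) L \<and> (\<forall>g\<in>C. 0 \<le> L g)}"

end

theory Submission
  imports Defs
begin

text \<open>Writing \<open>G\<close> entrywise expresses \<open>g\<^sub>G\<close> as a real combination of the real and imaginary
  parts of the entries of \<open>(\<otimes>\<^sub>j x\<^sub>j)(\<otimes>\<^sub>j x\<^sub>j)\<^sup>\<dagger>\<close>, each of which lies in \<open>\<L>\<^sub>R\<close>; so for linear \<open>L\<close>
  one gets \<open>L(g\<^sub>G) = Re Tr(GZ)\<close>, and membership in the dual cone is exactly the trace condition.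
  Positivity of \<open>Z\<close> is then automatic: \<open>v\<^sup>\<dagger>Zv = L(g\<^sub>G)\<close> for \<open>G = vv\<^sup>\<dagger> \<succeq> 0\<close>, and \<open>\<Sigma>\<^sup>\<ge> \<subseteq> \<C>\<close>.\<close>

lemma finite_Idx: "finite (Idx m n)"
  unfolding Idx_def by (simp add: finite_PiE)

lemma linear_onD:
  assumes "linear_on V L" "f \<in> V" "g \<in> V"
  shows "L (\<lambda>x. a * f x + b * g x) = a * L f + b * L g"
  using assms unfolding linear_on_def by blast

lemma linear_on_sum:
  assumes "linear_on V L"
    and V_comb: "\<And>f g a b. f \<in> V \<Longrightarrow> g \<in> V \<Longrightarrow> (\<lambda>x. a * f x + b * g x) \<in> V"
    and V_zero: "(\<lambda>x. 0) \<in> V"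
    and "finite S" "\<And>s. s \<in> S \<Longrightarrow> f s \<in> V"
  shows "(\<lambda>x. \<Sum>s\<in>S. f s x) \<in> V \<and> L (\<lambda>x. \<Sum>s\<in>S. f s x) = (\<Sum>s\<in>S. L (f s))"
  using assms(4,5)
proof (induction S rule: finite_induct)
  case empty
  show ?case using linear_onD[OF assms(1) V_zero V_zero, of 0 0] V_zero by simp
next
  case (insert a F)
  let ?sF = "\<lambda>x. \<Sum>s\<in>F. f s x"
  have fa: "f a \<in> V" and IH: "?sF \<in> V" "L ?sF = (\<Sum>s\<in>F. L (f s))"
    using insert by auto
  have "L (\<lambda>x. 1 * f a x + 1 * ?sF x) = 1 * L (f a) + 1 * L ?sF"
    by (rule linear_onD[OF assms(1) fa IH(1)])
  moreover have "(\<lambda>x. 1 * f a x + 1 * ?sF x) \<in> V"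
    using V_comb[OF fa IH(1)] .
  ultimately show ?case using insert(1,2) IH(2) by simp
qed

lemma gG_lincomb:
  "gG m n (\<lambda>i k. of_real a * G i k + of_real b * H i k) = (\<lambda>x. a * gG m n G x + b * gG m n H x)"
  unfolding gG_def by (rule ext) (simp add: algebra_simps sum.distrib sum_distrib_left)

lemma LR_lincomb:
  assumes "f \<in> LR m n" "g \<in> LR m n"
  shows "(\<lambda>x. a * f x + b * g x) \<in> LR m n"
proof -
  obtain G H where G: "hermitian m n G" "f = gG m n G" and H: "hermitian m n H" "g = gG m n H"
    using assms unfolding LR_def by blast
  have "hermitian m n (\<lambda>i k. of_real a * G i k + of_real b * H i k)"
    unfolding hermitian_def
  proof (intro ballI)
    fix i k assume "i \<in> Idx m n" "k \<in> Idx m n"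
    then have "G k i = cnj (G i k)" "H k i = cnj (H i k)"
      using G(1) H(1) unfolding hermitian_def by blast+
    then show "of_real a * G i k + of_real b * H i k = cnj (of_real a * G k i + of_real b * H k i)"
      by simp
  qed
  then have "gG m n (\<lambda>i k. of_real a * G i k + of_real b * H i k) \<in> LR m n"
    unfolding LR_def by blast
  then show ?thesis
    unfolding gG_lincomb G(2) H(2) .
qed

lemma zero_in_LR: "(\<lambda>x. 0) \<in> LR m n"
proof -
  have "gG m n (\<lambda>i k. 0) = (\<lambda>x. 0)" "hermitian m n (\<lambda>i k. 0)"
    unfolding gG_def hermitian_def by auto
  then show ?thesis unfolding LR_def by force
qed

definition unit_mat :: "(nat \<Rightarrow> nat) \<Rightarrow> (nat \<Rightarrow> nat) \<Rightarrow> mat" where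
  "unit_mat a b = (\<lambda>p q. if p = a \<and> q = b then 1 else 0)"

lemma quad_form_unit_mat:
  assumes "finite S" "a \<in> S" "b \<in> S"
  shows "(\<Sum>p\<in>S. \<Sum>q\<in>S. cnj (u p) * unit_mat a b p q * u q) = cnj (u a) * u b"
proof -
  have "(\<Sum>q\<in>S. cnj (u p) * unit_mat a b p q * u q)
      = (\<Sum>q\<in>S. if q = b then (if p = a then cnj (u a) * u b else 0) else 0)" for p
    by (rule sum.cong) (auto simp: unit_mat_def)
  then show ?thesis using assms by simp
qed

lemma gG_hermitian_unit:
  fixes c :: complex
  assumes a: "a \<in> Idx m n" and b: "b \<in> Idx m n"
  defines "U \<equiv> \<lambda>p q. c * unit_mat a b p q + cnj c * unit_mat b a p q"
  shows "hermitian m n U"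
    and "gG m n U = (\<lambda>x. if x \<in> Omega m n then 2 * Re (c * cnj (tens m x a) * tens m x b) else 0)"
proof -
  have "unit_mat a b p q = unit_mat b a q p" "cnj (unit_mat a b p q) = unit_mat a b p q" for a b p q
    by (simp_all add: unit_mat_def conj_commute)
  then show "hermitian m n U"
    unfolding hermitian_def U_def by (simp add: add.commute)
  have quad_U: "Re (\<Sum>p\<in>Idx m n. \<Sum>q\<in>Idx m n. cnj (u p) * U p q * u q) = 2 * Re (c * cnj (u a) * u b)" for u
  proof -
    have "(\<Sum>p\<in>Idx m n. \<Sum>q\<in>Idx m n. cnj (u p) * U p q * u q)
        = c * (\<Sum>p\<in>Idx m n. \<Sum>q\<in>Idx m n. cnj (u p) * unit_mat a b p q * u q)
          + cnj c * (\<Sum>p\<in>Idx m n. \<Sum>q\<in>Idx m n. cnj (u p) * unit_mat b a p q * u q)"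
      unfolding U_def by (simp add: algebra_simps sum.distrib sum_distrib_left)
    also have "\<dots> = c * cnj (u a) * u b + cnj (c * cnj (u a) * u b)"
      unfolding quad_form_unit_mat[OF finite_Idx a b] quad_form_unit_mat[OF finite_Idx b a]
      by (simp add: mult.commute mult.left_commute)
    also have "\<dots> = of_real (2 * Re (c * cnj (u a) * u b))"
      by (rule complex_add_cnj)
    finally show ?thesis by simp
  qed
  show "gG m n U = (\<lambda>x. if x \<in> Omega m n then 2 * Re (c * cnj (tens m x a) * tens m x b) else 0)"
    unfolding gG_def quad_U ..
qed

lemma entry_re_in_LR:
  assumes "i \<in> Idx m n" "k \<in> Idx m n"
  shows "entry_re m n i k \<in> LR m n"
proof -
  have "Re (t * cnj s) = 2 * Re (1 / 2 * cnj s * t)" for t s :: complex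
    by simp
  then have "entry_re m n i k = gG m n (\<lambda>p q. (1/2) * unit_mat k i p q + cnj (1/2) * unit_mat i k p q)"
    unfolding gG_hermitian_unit(2)[OF assms(2,1)] entry_re_def by presburger
  then show ?thesis unfolding LR_def using gG_hermitian_unit(1)[OF assms(2,1)] by blast
qed

lemma entry_im_in_LR:
  assumes "i \<in> Idx m n" "k \<in> Idx m n"
  shows "entry_im m n i k \<in> LR m n"
proof -
  have "Im (t * cnj s) = 2 * Re (- \<i> / 2 * cnj s * t)" for t s :: complex
    by (simp add: field_simps)
  then have "entry_im m n i k = gG m n (\<lambda>p q. (- \<i> / 2) * unit_mat k i p q + cnj (- \<i> / 2) * unit_mat i k p q)"
    unfolding gG_hermitian_unit(2)[OF assms(2,1)] entry_im_def by presburger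
  then show ?thesis unfolding LR_def using gG_hermitian_unit(1)[OF assms(2,1)] by blast
qed

lemma gG_expand_entries:
  "gG m n G = (\<lambda>x. \<Sum>p\<in>Idx m n \<times> Idx m n.
      Re (G (fst p) (snd p)) * entry_re m n (snd p) (fst p) x
      - Im (G (fst p) (snd p)) * entry_im m n (snd p) (fst p) x)"
proof (rule ext)
  fix x
  show "gG m n G x = (\<Sum>p\<in>Idx m n \<times> Idx m n.
      Re (G (fst p) (snd p)) * entry_re m n (snd p) (fst p) x
      - Im (G (fst p) (snd p)) * entry_im m n (snd p) (fst p) x)"
  proof (cases "x \<in> Omega m n")
    case True
    then have "gG m n G x = (\<Sum>p\<in>Idx m n \<times> Idx m n.
        Re (cnj (tens m x (fst p)) * G (fst p) (snd p) * tens m x (snd p)))"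
      unfolding gG_def by (simp add: Re_sum sum.cartesian_product case_prod_beta)
    also have "\<dots> = (\<Sum>p\<in>Idx m n \<times> Idx m n.
        Re (G (fst p) (snd p)) * entry_re m n (snd p) (fst p) x
        - Im (G (fst p) (snd p)) * entry_im m n (snd p) (fst p) x)"
      using True by (intro sum.cong) (auto simp: entry_re_def entry_im_def algebra_simps)
    finally show ?thesis .
  qed (simp add: gG_def entry_re_def entry_im_def)
qed

lemma linear_on_gG_eq_trace_prod:
  assumes lin: "linear_on (LR m n) L"
  shows "L (gG m n G) = Re (trace_prod m n G (Zmat m n L))"
proof -
  let ?h = "\<lambda>p x. Re (G (fst p) (snd p)) * entry_re m n (snd p) (fst p) x
      - Im (G (fst p) (snd p)) * entry_im m n (snd p) (fst p) x"
  have h_LR: "?h p \<in> LR m n" and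
    L_h: "L (?h p) = Re (G (fst p) (snd p) * Zmat m n L (snd p) (fst p))"
    if p_Idx: "p \<in> Idx m n \<times> Idx m n" for p
  proof -
    obtain i k where p: "p = (i, k)" and i: "i \<in> Idx m n" and k: "k \<in> Idx m n"
      using p_Idx by blast
    show "?h p \<in> LR m n"
      unfolding p using LR_lincomb[OF entry_re_in_LR[OF k i] entry_im_in_LR[OF k i],
          of "Re (G i k)" "- Im (G i k)"]
      by simp
    show "L (?h p) = Re (G (fst p) (snd p) * Zmat m n L (snd p) (fst p))"
      unfolding p using linear_onD[OF lin entry_re_in_LR[OF k i] entry_im_in_LR[OF k i],
          of "Re (G i k)" "- Im (G i k)"]
      by (simp add: Zmat_def)
  qed
  have "L (gG m n G) = (\<Sum>p\<in>Idx m n \<times> Idx m n. L (?h p))"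
    unfolding gG_expand_entries[of m n G]
    by (rule conjunct2[OF linear_on_sum[OF lin LR_lincomb zero_in_LR _ h_LR]])
      (simp_all add: finite_Idx)
  also have "\<dots> = (\<Sum>p\<in>Idx m n \<times> Idx m n. Re (G (fst p) (snd p) * Zmat m n L (snd p) (fst p)))"
    using L_h by (rule sum.cong[OF refl])
  also have "\<dots> = Re (trace_prod m n G (Zmat m n L))"
    unfolding trace_prod_def by (simp add: Re_sum sum.cartesian_product case_prod_beta)
  finally show ?thesis .
qed

lemma hermitian_Zmat:
  assumes lin: "linear_on (LR m n) L"
  shows "hermitian m n (Zmat m n L)"
  unfolding hermitian_def
proof (intro ballI)
  fix i k assume i: "i \<in> Idx m n" and k: "k \<in> Idx m n"
  have "entry_re m n i k = entry_re m n k i"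
    unfolding entry_re_def by (rule ext) (simp add: mult.commute)
  moreover have "entry_im m n i k = (\<lambda>x. (-1) * entry_im m n k i x + 0 * entry_im m n k i x)"
    unfolding entry_im_def by (rule ext) (simp add: mult.commute)
  then have "L (entry_im m n i k) = - L (entry_im m n k i)"
    using linear_onD[OF lin entry_im_in_LR[OF k i] entry_im_in_LR[OF k i], of "-1" 0] by simp
  ultimately show "Zmat m n L i k = cnj (Zmat m n L k i)"
    unfolding Zmat_def by (simp add: complex_eq_iff)
qed

lemma psd_outer_product: "psd m n (\<lambda>p q. v p * cnj (v q))"
proof -
  have "quad m n (\<lambda>p q. v p * cnj (v q)) w = of_real ((cmod (\<Sum>i\<in>Idx m n. cnj (w i) * v i))\<^sup>2)" for w
    unfolding quad_def complex_norm_square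
    by (simp add: sum_product algebra_simps)
  then show ?thesis unfolding psd_def hermitian_def by simp
qed

lemma quad_eq_trace_prod_outer: "quad m n Z v = trace_prod m n (\<lambda>p q. v p * cnj (v q)) Z"
  unfolding quad_def trace_prod_def
  by (subst sum.swap) (simp add: algebra_simps)

theorem proposition10:
  fixes m :: nat and n :: "nat \<Rightarrow> nat" and C :: "gamble set"
  assumes "\<forall>j<m. 0 < n j"
    and "P_coherent m n C"
  shows "dual_cone m n C =
    {L. linear_on (LR m n) L \<and> psd m n (Zmat m n L) \<and>
        (\<forall>G. hermitian m n G \<and> gG m n G \<in> C \<longrightarrow> 0 \<le> Re (trace_prod m n G (Zmat m n L)))}"
proof -
  have C_LR: "C \<subseteq> LR m n" and psd_in_C: "\<And>G. psd m n G \<Longrightarrow> gG m n G \<in> C"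
    using assms(2) unfolding P_coherent_def SigmaGe_def by blast+
  have "(\<forall>g\<in>C. 0 \<le> L g) \<longleftrightarrow>
      psd m n (Zmat m n L) \<and> (\<forall>G. hermitian m n G \<and> gG m n G \<in> C \<longrightarrow> 0 \<le> Re (trace_prod m n G (Zmat m n L)))"
    if lin: "linear_on (LR m n) L" for L
    unfolding linear_on_gG_eq_trace_prod[OF lin, symmetric]
  proof
    assume nonneg: "\<forall>g\<in>C. 0 \<le> L g"
    have "0 \<le> Re (quad m n (Zmat m n L) v)" for v
      using nonneg psd_in_C[OF psd_outer_product]
      unfolding quad_eq_trace_prod_outer linear_on_gG_eq_trace_prod[OF lin, symmetric] by blast
    with nonneg show "psd m n (Zmat m n L) \<and> (\<forall>G. hermitian m n G \<and> gG m n G \<in> C \<longrightarrow> 0 \<le> L (gG m n G))"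
      unfolding psd_def using hermitian_Zmat[OF lin] by blast
  next
    assume "psd m n (Zmat m n L) \<and> (\<forall>G. hermitian m n G \<and> gG m n G \<in> C \<longrightarrow> 0 \<le> L (gG m n G))"
    with C_LR show "\<forall>g\<in>C. 0 \<le> L g"
      unfolding LR_def by blast
  qed
  then show ?thesis unfolding dual_cone_def by blast
qed

end
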